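(* Let $(X,\le)$ be a poset, $E$ an equivalence relation on $X$ with ${\le}\subseteq E$, and $\alpha:X\to X$ an order automorphism of $(X,\le)$ with $\alpha\subseteq E$. (i) If $0=\alpha\circ({\le}^c)^\smile=({\le}^c)^\smile\circ\alpha$, then $\langle\mathsf{Up}(\mathbf E),\cap,\cup,\circ,\le,0,{\sim},-\rangle$ is a distributive InFL-algebra. (ii) For a positive integer $n$, the algebra in (i) is $n$-periodic if and only if $|\alpha|=n$.
   Context: For binary relations: converse $R^\smile=\{(x,y)\mid(y,x)\in R\}$; composition $R\circ S=\{(x,y)\mid\exists z\,((x,z)\in R,(z,y)\in S)\}$. A function $\alpha$ is identified with its graph; $\alpha^0=\mathrm{id}_X$, $\alpha^{k+1}=\alpha^k\circ\alpha$, and the order $|\alpha|$ is the smallest positive integer $k$ with $\alpha^k=\mathrm{id}_X$. For a poset $(X,\le)$ and an equivalence relation $E\supseteq{\le}$, $E$ is partially ordered by $(u,v)\preceq(x,y)$ iff $x\le u$ and $v\le y$; $\mathbf E=(E,\preceq)$ and $\mathsf{Up}(\mathbf E)$ is its set of up-sets (a distributive lattice under $\cap,\cup$; it is closed under $\circ$ with identity $\le$). For $R\subseteq E$, $R^c=E\setminus R$. Residuals: $R\backslash S=(R^\smile\circ S^c)^c$, $R/S=(R^c\circ S^\smile)^c$; ${\sim}R=R\backslash 0$, $-R=0/R$. An FL-algebra is a residuated lattice with an extra constant $0$; it is InFL if ${\sim}{-}a={-}{\sim}a=a$ for all $a$; it is $n$-periodic if $n$ is the smallest positive integer with ${\sim}^na=-^na$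 for all $a$. An order automorphism is a bijection $\alpha$ with $x\le y\iff\alpha(x)\le\alpha(y)$. *)

theory Defs
  imports Main
begin

definition relc :: "('a \<times> 'a) set \<Rightarrow> ('a \<times> 'a) set \<Rightarrow> ('a \<times> 'a) set" where
  "relc E R = E - R"

definition ldivE :: "('a \<times> 'a) set \<Rightarrow> ('a \<times> 'a) set \<Rightarrow> ('a \<times> 'a) set \<Rightarrow> ('a \<times> 'a) set" where
  "ldivE E R S = relc E (converse R O relc E S)"

definition rdivE :: "('a \<times> 'a) set \<Rightarrow> ('a \<times> 'a) set \<Rightarrow> ('a \<times> 'a) set \<Rightarrow> ('a \<times> 'a) set" where
  "rdivE E R S = relc E (relc E R O converse S)"

definition prec :: "('a \<times> 'a) set \<Rightarrow> 'a \<times> 'a \<Rightarrow> 'a \<times> 'a \<Rightarrow> bool" where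
  "prec le p q \<longleftrightarrow> (fst q, fst p) \<in> le \<and> (snd p, snd q) \<in> le"

definition UpE :: "('a \<times> 'a) set \<Rightarrow> ('a \<times> 'a) set \<Rightarrow> ('a \<times> 'a) set set" where
  "UpE le E = {U. U \<subseteq> E \<and> (\<forall>p\<in>U. \<forall>q\<in>E. prec le p q \<longrightarrow> q \<in> U)}"

definition graph_on :: "'a set \<Rightarrow> ('a \<Rightarrow> 'a) \<Rightarrow> ('a \<times> 'a) set" where
  "graph_on X f = {(x, f x) | x. x \<in> X}"

definition order_automorphism :: "'a set \<Rightarrow> ('a \<times> 'a) set \<Rightarrow> ('a \<Rightarrow> 'a) \<Rightarrow> bool" where
  "order_automorphism X le f \<longleftrightarrow> bij_betw f X X \<and>
     (\<forall>x\<in>X. \<forall>y\<in>X. (x, y) \<in> le \<longleftrightarrow> (f x, f y) \<in> le)"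

definition perm_order_is :: "'a set \<Rightarrow> ('a \<Rightarrow> 'a) \<Rightarrow> nat \<Rightarrow> bool" where
  "perm_order_is X f n \<longleftrightarrow> 0 < n \<and> graph_on X (f ^^ n) = Id_on X \<and>
     (\<forall>k. 0 < k \<and> k < n \<longrightarrow> graph_on X (f ^^ k) \<noteq> Id_on X)"

text \<open>FL-algebra on a carrier A: lattice (order x \<le> y iff meet x y = x), monoid (mult, e),
  residuals ldiv, rdiv (a\<cdot>b \<le> c iff b \<le> a\<setminus>c iff a \<le> c/b), extra constant zero.\<close>
definition fl_algebra ::
  "'b set \<Rightarrow> ('b \<Rightarrow> 'b \<Rightarrow> 'b) \<Rightarrow> ('b \<Rightarrow> 'b \<Rightarrow> 'b) \<Rightarrow> ('b \<Rightarrow> 'b \<Rightarrow> 'b) \<Rightarrow> 'b \<Rightarrow> 'b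
     \<Rightarrow> ('b \<Rightarrow> 'b \<Rightarrow> 'b) \<Rightarrow> ('b \<Rightarrow> 'b \<Rightarrow> 'b) \<Rightarrow> bool" where
  "fl_algebra A meet join mult e zero ldiv rdiv \<longleftrightarrow>
     e \<in> A \<and> zero \<in> A \<and>
     (\<forall>a\<in>A. \<forall>b\<in>A. meet a b \<in> A \<and> join a b \<in> A \<and> mult a b \<in> A \<and> ldiv a b \<in> A \<and> rdiv a b \<in> A) \<and>
     (\<forall>a\<in>A. \<forall>b\<in>A. meet a b = meet b a \<and> join a b = join b a \<and>
         meet a (join a b) = a \<and> join a (meet a b) = a) \<and>
     (\<forall>a\<in>A. \<forall>b\<in>A. \<forall>c\<in>A. meet a (meet b c) = meet (meet a b) c \<and>
         join a (join b c) = join (join a b) c \<and> mult a (mult b c) = mult (mult a b) c) \<and>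
     (\<forall>a\<in>A. mult e a = a \<and> mult a e = a) \<and>
     (\<forall>a\<in>A. \<forall>b\<in>A. \<forall>c\<in>A.
        (meet (mult a b) c = mult a b \<longleftrightarrow> meet b (ldiv a c) = b) \<and>
        (meet (mult a b) c = mult a b \<longleftrightarrow> meet a (rdiv c b) = a))"

definition distributive_on :: "'b set \<Rightarrow> ('b \<Rightarrow> 'b \<Rightarrow> 'b) \<Rightarrow> ('b \<Rightarrow> 'b \<Rightarrow> 'b) \<Rightarrow> bool" where
  "distributive_on A meet join \<longleftrightarrow>
     (\<forall>a\<in>A. \<forall>b\<in>A. \<forall>c\<in>A. meet a (join b c) = join (meet a b) (meet a c))"

text \<open>InFL: \<sim>a = a\<setminus>0, -a = 0/a, and \<sim>-a = -\<sim>a = a.\<close>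
definition infl_algebra ::
  "'b set \<Rightarrow> ('b \<Rightarrow> 'b \<Rightarrow> 'b) \<Rightarrow> ('b \<Rightarrow> 'b \<Rightarrow> 'b) \<Rightarrow> ('b \<Rightarrow> 'b \<Rightarrow> 'b) \<Rightarrow> 'b \<Rightarrow> 'b
     \<Rightarrow> ('b \<Rightarrow> 'b \<Rightarrow> 'b) \<Rightarrow> ('b \<Rightarrow> 'b \<Rightarrow> 'b) \<Rightarrow> bool" where
  "infl_algebra A meet join mult e zero ldiv rdiv \<longleftrightarrow>
     fl_algebra A meet join mult e zero ldiv rdiv \<and>
     (\<forall>a\<in>A. ldiv (rdiv zero a) zero = a \<and> rdiv zero (ldiv a zero) = a)"

definition n_periodic ::
  "'b set \<Rightarrow> 'b \<Rightarrow> ('b \<Rightarrow> 'b \<Rightarrow> 'b) \<Rightarrow> ('b \<Rightarrow> 'b \<Rightarrow> 'b) \<Rightarrow> nat \<Rightarrow> bool" where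
  "n_periodic A zero ldiv rdiv n \<longleftrightarrow> 0 < n \<and>
     (\<forall>a\<in>A. ((\<lambda>x. ldiv x zero) ^^ n) a = ((\<lambda>x. rdiv zero x) ^^ n) a) \<and>
     (\<forall>k. 0 < k \<and> k < n \<longrightarrow>
        \<not> (\<forall>a\<in>A. ((\<lambda>x. ldiv x zero) ^^ k) a = ((\<lambda>x. rdiv zero x) ^^ k) a))"

end

theory Submission
  imports Defs
begin

text \<open>Up-sets of \<open>\<E>\<close> are closed under composition and both residuals, with \<open>\<le>\<close> as unit, so
  every up-set can serve as the constant 0 of an FL-algebra. For \<open>0 = \<alpha> \<circ> (\<le>\<^sup>c)\<inverse>\<close> both
  negations \<open>- = rneg\<close> and \<open>\<sim> = lneg\<close> are computed pointwise: \<open>(x,y) \<in> -R \<longleftrightarrow> (y,\<alpha> x) \<notin> R\<close> and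
  \<open>(x,\<alpha> y) \<in> \<sim>R \<longleftrightarrow> (y,x) \<notin> R\<close>. Hence \<open>\<sim>\<close> and \<open>-\<close> are mutually inverse (involutivity), and
  \<open>--R\<close> is the pullback of \<open>R\<close> along \<open>\<alpha> \<times> \<alpha>\<close>. So \<open>\<sim>\<^sup>n = -\<^sup>n\<close> iff \<open>-\<^sup>2\<^sup>n\<close> is the identity,
  iff \<open>\<alpha>\<^sup>n\<close> fixes every principal up-set \<open>{(u,v). u \<le> x \<le> v}\<close>, i.e. iff \<open>\<alpha>\<^sup>n = id\<close>.\<close>

lemma funpow_closed_on:
  assumes "f ` A \<subseteq> A" and "a \<in> A"
  shows "(f ^^ n) a \<in> A"
  using assms by (induction n) auto

lemma funpow_right_inverse_on:
  assumes "g ` A \<subseteq> A" and "\<And>a. a \<in> A \<Longrightarrow> f (g a) = a" and "a \<in> A"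
  shows "(f ^^ n) ((g ^^ n) a) = a"
  using assms(3)
proof (induction n arbitrary: a)
  case (Suc n)
  have "(f ^^ Suc n) ((g ^^ Suc n) a) = f ((f ^^ n) ((g ^^ n) (g a)))"
    by (simp add: funpow_swap1)
  also have "\<dots> = a"
    using Suc assms(1,2) by auto
  finally show ?case .
qed simp

lemma funpow_eq_iff_double_funpow_id_on:
  assumes g_closed: "g ` A \<subseteq> A" and inverse: "\<And>a. a \<in> A \<Longrightarrow> f (g a) = a"
  shows "(\<forall>a\<in>A. (g ^^ n) a = (f ^^ n) a) \<longleftrightarrow> (\<forall>a\<in>A. (f ^^ (2 * n)) a = a)"
proof
  assume eq: "\<forall>a\<in>A. (g ^^ n) a = (f ^^ n) a"
  show "\<forall>a\<in>A. (f ^^ (2 * n)) a = a"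
  proof
    fix a assume a: "a \<in> A"
    have "(f ^^ (2 * n)) a = (f ^^ n) ((f ^^ n) a)"
      by (simp add: funpow_add mult_2)
    also have "\<dots> = (f ^^ n) ((g ^^ n) a)"
      using eq a by simp
    also have "\<dots> = a"
      using funpow_right_inverse_on[OF g_closed inverse a] .
    finally show "(f ^^ (2 * n)) a = a" .
  qed
next
  assume id: "\<forall>a\<in>A. (f ^^ (2 * n)) a = a"
  show "\<forall>a\<in>A. (g ^^ n) a = (f ^^ n) a"
  proof
    fix a assume a: "a \<in> A"
    have "(g ^^ n) a = (f ^^ n) ((f ^^ n) ((g ^^ n) a))"
      using id funpow_closed_on[OF g_closed a] by (simp add: funpow_add mult_2)
    also have "\<dots> = (f ^^ n) a"
      using funpow_right_inverse_on[OF g_closed inverse a] by simp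
    finally show "(g ^^ n) a = (f ^^ n) a" .
  qed
qed

lemma graph_on_eq_Id_on_iff: "graph_on X f = Id_on X \<longleftrightarrow> (\<forall>x\<in>X. f x = x)"
  unfolding graph_on_def Id_on_def by (auto simp: set_eq_iff)

lemma distributive_on_Int_Un: "distributive_on A (\<inter>) (\<union>)"
  by (simp add: distributive_on_def Int_Un_distrib)

lemma relcomp_subset_iff_subset_ldivE:
  assumes "trans E" and "R \<subseteq> E" and "S \<subseteq> E"
  shows "R O S \<subseteq> T \<longleftrightarrow> S \<subseteq> ldivE E R T"
  using assms unfolding ldivE_def relc_def trans_def by blast

lemma relcomp_subset_iff_subset_rdivE:
  assumes "trans E" and "R \<subseteq> E" and "S \<subseteq> E"
  shows "R O S \<subseteq> T \<longleftrightarrow> R \<subseteq> rdivE E T S"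
  using assms unfolding rdivE_def relc_def trans_def by blast

locale poset_in_equivalence =
  fixes X :: "'a set" and le E :: "('a \<times> 'a) set"
  assumes poset: "partial_order_on X le"
    and eqv: "equiv X E"
    and le_subset_E: "le \<subseteq> E"
begin

abbreviation Up :: "('a \<times> 'a) set set" where
  "Up \<equiv> UpE le E"

lemma E_in_X: "(x, y) \<in> E \<Longrightarrow> x \<in> X \<and> y \<in> X"
  using equiv_type[OF eqv] by blast

lemma E_refl: "x \<in> X \<Longrightarrow> (x, x) \<in> E"
  using eqv by (auto elim: equivE dest: refl_onD)

lemma E_sym: "(x, y) \<in> E \<Longrightarrow> (y, x) \<in> E"
  using eqv by (auto elim: equivE dest: symD)

lemma E_trans: "(x, y) \<in> E \<Longrightarrow> (y, z) \<in> E \<Longrightarrow> (x, z) \<in> E"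
  using eqv by (auto elim: equivE dest: transD)

lemma le_in_X: "(x, y) \<in> le \<Longrightarrow> x \<in> X \<and> y \<in> X"
  using le_subset_E E_in_X by blast

lemma le_refl: "x \<in> X \<Longrightarrow> (x, x) \<in> le"
  using poset by (auto simp: partial_order_on_def preorder_on_def dest: refl_onD)

lemma le_trans: "(x, y) \<in> le \<Longrightarrow> (y, z) \<in> le \<Longrightarrow> (x, z) \<in> le"
  using poset by (auto simp: partial_order_on_def preorder_on_def dest: transD)

lemma le_antisym: "(x, y) \<in> le \<Longrightarrow> (y, x) \<in> le \<Longrightarrow> x = y"
  using poset by (auto simp: partial_order_on_def dest: antisymD)

lemma UpE_subset: "R \<in> Up \<Longrightarrow> R \<subseteq> E"
  unfolding UpE_def by blast

lemma UpED:
  assumes "R \<in> Up" and "(u, v) \<in> R" and "(x, u) \<in> le" and "(v, y) \<in> le"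
  shows "(x, y) \<in> R"
proof -
  have "(x, y) \<in> E"
    using assms UpE_subset le_subset_E E_trans by blast
  then show ?thesis
    using assms unfolding UpE_def prec_def by auto
qed

lemma UpEI:
  assumes "R \<subseteq> E"
    and "\<And>u v x y. (u, v) \<in> R \<Longrightarrow> (x, u) \<in> le \<Longrightarrow> (v, y) \<in> le \<Longrightarrow> (x, y) \<in> R"
  shows "R \<in> Up"
  using assms unfolding UpE_def prec_def by auto

lemma UpE_eqI:
  assumes "R \<in> Up" and "S \<in> Up" and "\<And>x y. (x, y) \<in> E \<Longrightarrow> (x, y) \<in> R \<longleftrightarrow> (x, y) \<in> S"
  shows "R = S"
  using assms UpE_subset by auto

lemma le_UpE: "le \<in> Up"
  by (rule UpEI[OF le_subset_E]) (meson le_trans)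

lemma Int_UpE: "R \<in> Up \<Longrightarrow> S \<in> Up \<Longrightarrow> R \<inter> S \<in> Up"
  unfolding UpE_def by blast

lemma Un_UpE: "R \<in> Up \<Longrightarrow> S \<in> Up \<Longrightarrow> R \<union> S \<in> Up"
  unfolding UpE_def by blast

lemma relcomp_UpE:
  assumes R: "R \<in> Up" and S: "S \<in> Up"
  shows "R O S \<in> Up"
proof (rule UpEI)
  show "R O S \<subseteq> E"
    using UpE_subset[OF R] UpE_subset[OF S] E_trans by blast
  fix u v x y assume "(u, v) \<in> R O S" "(x, u) \<in> le" "(v, y) \<in> le"
  then show "(x, y) \<in> R O S"
    using UpED[OF R] UpED[OF S] UpE_subset[OF R] E_in_X le_refl by blast
qed

lemma le_relcomp_UpE: "R \<in> Up \<Longrightarrow> le O R = R"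
  using UpED UpE_subset E_in_X le_refl by fast

lemma relcomp_le_UpE: "R \<in> Up \<Longrightarrow> R O le = R"
  using UpED UpE_subset E_in_X le_refl by fast

lemma ldivE_UpE:
  assumes R: "R \<in> Up" and S: "S \<in> Up"
  shows "ldivE E R S \<in> Up"
proof (rule UpEI)
  show "ldivE E R S \<subseteq> E"
    unfolding ldivE_def relc_def by blast
  fix u v x y assume uv: "(u, v) \<in> ldivE E R S" and xu: "(x, u) \<in> le" and vy: "(v, y) \<in> le"
  have "(x, y) \<in> E"
    using uv xu vy le_subset_E E_trans unfolding ldivE_def relc_def by blast
  moreover have "(z, y) \<in> S" if "(z, x) \<in> R" "(z, y) \<in> E" for z
  proof -
    have "(z, u) \<in> R"
      using UpED[OF R that(1) _ xu] that E_in_X le_refl by blast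
    moreover have "(z, v) \<in> E"
      using that(2) vy le_subset_E E_sym E_trans by blast
    ultimately have "(z, v) \<in> S"
      using uv unfolding ldivE_def relc_def by blast
    then show ?thesis
      using UpED[OF S _ _ vy] that E_in_X le_refl by blast
  qed
  ultimately show "(x, y) \<in> ldivE E R S"
    unfolding ldivE_def relc_def by blast
qed

lemma rdivE_UpE:
  assumes R: "R \<in> Up" and S: "S \<in> Up"
  shows "rdivE E R S \<in> Up"
proof (rule UpEI)
  show "rdivE E R S \<subseteq> E"
    unfolding rdivE_def relc_def by blast
  fix u v x y assume uv: "(u, v) \<in> rdivE E R S" and xu: "(x, u) \<in> le" and vy: "(v, y) \<in> le"
  have "(x, y) \<in> E"
    using uv xu vy le_subset_E E_trans unfolding rdivE_def relc_def by blast
  moreover have "(x, z) \<in> R" if "(y, z) \<in> S" "(x, z) \<in> E" for z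
  proof -
    have "(v, z) \<in> S"
      using UpED[OF S that(1) vy] that E_in_X le_refl by blast
    moreover have "(u, z) \<in> E"
      using that(2) xu le_subset_E E_sym E_trans by blast
    ultimately have "(u, z) \<in> R"
      using uv unfolding rdivE_def relc_def by blast
    then show ?thesis
      using UpED[OF R _ xu] that E_in_X le_refl by blast
  qed
  ultimately show "(x, y) \<in> rdivE E R S"
    unfolding rdivE_def relc_def by blast
qed

lemma fl_algebra_UpE:
  assumes "Z \<in> Up"
  shows "fl_algebra Up (\<inter>) (\<union>) (O) le Z (ldivE E) (rdivE E)"
proof -
  have trans: "trans E"
    using eqv by (auto elim: equivE)
  have "R O S \<inter> T = R O S \<longleftrightarrow> S \<inter> ldivE E R T = S"
    and "R O S \<inter> T = R O S \<longleftrightarrow> R \<inter> rdivE E T S = R" if "R \<in> Up" "S \<in> Up" for R S T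
    using relcomp_subset_iff_subset_ldivE[OF trans] relcomp_subset_iff_subset_rdivE[OF trans]
      UpE_subset[OF that(1)] UpE_subset[OF that(2)] by (simp_all only: le_iff_inf)
  then show ?thesis
    unfolding fl_algebra_def
    using assms le_UpE Int_UpE Un_UpE relcomp_UpE ldivE_UpE rdivE_UpE
      le_relcomp_UpE relcomp_le_UpE
    by (auto simp: O_assoc)
qed

end

locale automorphism_in_equivalence = poset_in_equivalence +
  fixes \<alpha> :: "'a \<Rightarrow> 'a"
  assumes aut: "order_automorphism X le \<alpha>"
    and alpha_E: "graph_on X \<alpha> \<subseteq> E"
begin

abbreviation zero :: "('a \<times> 'a) set" where
  "zero \<equiv> graph_on X \<alpha> O converse (relc E le)"

definition lneg :: "('a \<times> 'a) set \<Rightarrow> ('a \<times> 'a) set" where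
  "lneg R = ldivE E R zero"

definition rneg :: "('a \<times> 'a) set \<Rightarrow> ('a \<times> 'a) set" where
  "rneg R = rdivE E zero R"

lemma alpha_in_X: "x \<in> X \<Longrightarrow> \<alpha> x \<in> X"
  using aut unfolding order_automorphism_def bij_betw_def by blast

lemma alpha_surj:
  assumes "y \<in> X"
  obtains x where "x \<in> X" and "\<alpha> x = y"
proof -
  have "y \<in> \<alpha> ` X"
    using aut assms unfolding order_automorphism_def bij_betw_def by simp
  then show ?thesis
    using that by blast
qed

lemma alpha_le_iff: "x \<in> X \<Longrightarrow> y \<in> X \<Longrightarrow> (\<alpha> x, \<alpha> y) \<in> le \<longleftrightarrow> (x, y) \<in> le"
  using aut unfolding order_automorphism_def by blast

lemma E_alpha: "x \<in> X \<Longrightarrow> (x, \<alpha> x) \<in> E"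
  using alpha_E unfolding graph_on_def by blast

lemma E_alpha_right: "(x, y) \<in> E \<Longrightarrow> (x, \<alpha> y) \<in> E"
  using E_trans E_alpha E_in_X by blast

lemma E_alpha_left: "(x, y) \<in> E \<Longrightarrow> (\<alpha> x, y) \<in> E"
  using E_trans E_sym[OF E_alpha] E_in_X by blast

lemma zero_iff: "(x, y) \<in> E \<Longrightarrow> (x, y) \<in> zero \<longleftrightarrow> (y, \<alpha> x) \<notin> le"
  unfolding graph_on_def relc_def using E_in_X E_sym E_alpha_right by auto

lemma zero_UpE: "zero \<in> Up"
proof (rule UpEI)
  show "zero \<subseteq> E"
    unfolding graph_on_def relc_def using E_alpha E_sym E_trans by blast
  then have uv_E: "(u, v) \<in> E" if "(u, v) \<in> zero" for u v
    using that by blast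
  fix u v x y assume uv: "(u, v) \<in> zero" and xu: "(x, u) \<in> le" and vy: "(v, y) \<in> le"
  have "(y, \<alpha> x) \<notin> le"
  proof
    assume "(y, \<alpha> x) \<in> le"
    moreover have "(\<alpha> x, \<alpha> u) \<in> le"
      using xu le_in_X alpha_le_iff by blast
    ultimately have "(v, \<alpha> u) \<in> le"
      using vy le_trans by blast
    then show False
      using uv uv_E zero_iff by blast
  qed
  moreover have "(x, y) \<in> E"
    using uv_E[OF uv] xu vy le_subset_E E_trans by blast
  ultimately show "(x, y) \<in> zero"
    using zero_iff by blast
qed

lemma lneg_UpE: "R \<in> Up \<Longrightarrow> lneg R \<in> Up"
  unfolding lneg_def using ldivE_UpE zero_UpE by blast

lemma rneg_UpE: "R \<in> Up \<Longrightarrow> rneg R \<in> Up"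
  unfolding rneg_def using rdivE_UpE zero_UpE by blast

lemma rneg_iff:
  assumes R: "R \<in> Up" and xy: "(x, y) \<in> E"
  shows "(x, y) \<in> rneg R \<longleftrightarrow> (y, \<alpha> x) \<notin> R"
proof -
  have x: "x \<in> X"
    using xy E_in_X by blast
  have "(x, y) \<in> (E - zero) O converse R \<longleftrightarrow> (\<exists>w. (x, w) \<in> E \<and> (w, \<alpha> x) \<in> le \<and> (y, w) \<in> R)"
    using zero_iff by blast
  also have "\<dots> \<longleftrightarrow> (y, \<alpha> x) \<in> R"
  proof
    assume "\<exists>w. (x, w) \<in> E \<and> (w, \<alpha> x) \<in> le \<and> (y, w) \<in> R"
    then show "(y, \<alpha> x) \<in> R"
      using UpED[OF R] xy E_in_X le_refl by blast
  next
    assume "(y, \<alpha> x) \<in> R"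
    then show "\<exists>w. (x, w) \<in> E \<and> (w, \<alpha> x) \<in> le \<and> (y, w) \<in> R"
      using E_alpha[OF x] le_refl[OF alpha_in_X[OF x]] by blast
  qed
  finally show ?thesis
    using xy unfolding rneg_def rdivE_def relc_def by blast
qed

lemma lneg_alpha_iff:
  assumes R: "R \<in> Up" and xy: "(x, y) \<in> E"
  shows "(x, \<alpha> y) \<in> lneg R \<longleftrightarrow> (y, x) \<notin> R"
proof -
  have "(x, \<alpha> y) \<in> converse R O (E - zero) \<longleftrightarrow>
      (\<exists>z. (z, x) \<in> R \<and> (z, \<alpha> y) \<in> E \<and> (\<alpha> y, \<alpha> z) \<in> le)"
    using zero_iff by blast
  also have "\<dots> \<longleftrightarrow> (\<exists>z. (z, x) \<in> R \<and> (z, \<alpha> y) \<in> E \<and> (y, z) \<in> le)"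
    using UpE_subset[OF R] xy E_in_X alpha_le_iff by blast
  also have "\<dots> \<longleftrightarrow> (y, x) \<in> R"
    using UpED[OF R] xy E_in_X le_refl E_alpha by meson
  finally show ?thesis
    using E_alpha_right[OF xy] unfolding lneg_def ldivE_def relc_def by blast
qed

lemma rneg_lneg: "R \<in> Up \<Longrightarrow> rneg (lneg R) = R"
  by (rule UpE_eqI) (simp_all add: rneg_UpE lneg_UpE rneg_iff lneg_alpha_iff E_sym)

lemma lneg_rneg:
  assumes R: "R \<in> Up"
  shows "lneg (rneg R) = R"
proof (rule UpE_eqI)
  fix x y assume xy: "(x, y) \<in> E"
  then obtain z where z: "z \<in> X" "\<alpha> z = y"
    using E_in_X alpha_surj by blast
  have zx: "(z, x) \<in> E"
    using xy z E_alpha E_sym E_trans by metis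
  have "(x, \<alpha> z) \<in> lneg (rneg R) \<longleftrightarrow> (z, x) \<notin> rneg R"
    by (rule lneg_alpha_iff[OF rneg_UpE[OF R] E_sym[OF zx]])
  also have "\<dots> \<longleftrightarrow> (x, \<alpha> z) \<in> R"
    using rneg_iff[OF R zx] by blast
  finally show "(x, y) \<in> lneg (rneg R) \<longleftrightarrow> (x, y) \<in> R"
    using z by simp
qed (simp_all add: R lneg_UpE rneg_UpE)

lemma rneg_rneg_iff:
  assumes "R \<in> Up" and "(x, y) \<in> E"
  shows "(x, y) \<in> rneg (rneg R) \<longleftrightarrow> (\<alpha> x, \<alpha> y) \<in> R"
  using assms by (simp add: rneg_iff rneg_UpE E_sym E_alpha_right)

lemma rneg_funpow_even:
  assumes R: "R \<in> Up"
  shows "(rneg ^^ (2 * m)) R = {(x, y) \<in> E. ((\<alpha> ^^ m) x, (\<alpha> ^^ m) y) \<in> R}"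
proof (induction m)
  case 0
  then show ?case
    using UpE_subset[OF R] by auto
next
  case (Suc m)
  have Up: "(rneg ^^ (2 * m)) R \<in> Up"
    using funpow_closed_on[of rneg Up] rneg_UpE R by blast
  have "(x, y) \<in> rneg (rneg ((rneg ^^ (2 * m)) R)) \<longleftrightarrow>
      (x, y) \<in> E \<and> ((\<alpha> ^^ Suc m) x, (\<alpha> ^^ Suc m) y) \<in> R" for x y
  proof (cases "(x, y) \<in> E")
    case True
    have "(x, y) \<in> rneg (rneg ((rneg ^^ (2 * m)) R)) \<longleftrightarrow> (\<alpha> x, \<alpha> y) \<in> (rneg ^^ (2 * m)) R"
      by (rule rneg_rneg_iff[OF Up True])
    also have "\<dots> \<longleftrightarrow> ((\<alpha> ^^ Suc m) x, (\<alpha> ^^ Suc m) y) \<in> R"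
      using Suc.IH E_alpha_left[OF E_alpha_right[OF True]] by (simp add: funpow_swap1)
    finally show ?thesis
      using True by simp
  next
    case False
    then show ?thesis
      using UpE_subset[OF rneg_UpE[OF rneg_UpE[OF Up]]] by blast
  qed
  then show ?case
    by (simp add: set_eq_iff)
qed

lemma rneg_funpow_even_id_iff:
  "(\<forall>R\<in>Up. (rneg ^^ (2 * n)) R = R) \<longleftrightarrow> (\<forall>x\<in>X. (\<alpha> ^^ n) x = x)"
proof
  assume even_id: "\<forall>R\<in>Up. (rneg ^^ (2 * n)) R = R"
  show "\<forall>x\<in>X. (\<alpha> ^^ n) x = x"
  proof
    fix x assume x: "x \<in> X"
    define P where "P = {(u, v) \<in> E. (u, x) \<in> le \<and> (x, v) \<in> le}"
    have P: "P \<in> Up"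
      unfolding P_def by (rule UpEI) (use le_trans le_subset_E E_trans in blast)+
    have "(x, x) \<in> P"
      unfolding P_def using E_refl[OF x] le_refl[OF x] by blast
    then have "(x, x) \<in> (rneg ^^ (2 * n)) P"
      using even_id P by simp
    then have "((\<alpha> ^^ n) x, (\<alpha> ^^ n) x) \<in> P"
      by (simp add: rneg_funpow_even[OF P])
    then show "(\<alpha> ^^ n) x = x"
      unfolding P_def using le_antisym by blast
  qed
next
  assume "\<forall>x\<in>X. (\<alpha> ^^ n) x = x"
  then have fixed: "((\<alpha> ^^ n) x, (\<alpha> ^^ n) y) = (x, y)" if "(x, y) \<in> E" for x y
    using that E_in_X by simp
  show "\<forall>R\<in>Up. (rneg ^^ (2 * n)) R = R"
  proof
    fix R assume R: "R \<in> Up"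
    have "(rneg ^^ (2 * n)) R = {(x, y) \<in> E. (x, y) \<in> R}"
      using fixed by (auto simp: rneg_funpow_even[OF R])
    also have "\<dots> = R"
      using UpE_subset[OF R] by auto
    finally show "(rneg ^^ (2 * n)) R = R" .
  qed
qed

lemma infl_algebra_UpE: "infl_algebra Up (\<inter>) (\<union>) (O) le zero (ldivE E) (rdivE E)"
  unfolding infl_algebra_def
  using fl_algebra_UpE[OF zero_UpE] lneg_rneg rneg_lneg unfolding lneg_def rneg_def by blast

lemma n_periodic_iff_perm_order_is:
  "n_periodic Up zero (ldivE E) (rdivE E) n \<longleftrightarrow> perm_order_is X \<alpha> n"
proof -
  have "(\<lambda>R. ldivE E R zero) = lneg" and "(\<lambda>R. rdivE E zero R) = rneg"
    by (simp_all add: lneg_def rneg_def fun_eq_iff)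
  moreover have "(\<forall>R\<in>Up. (lneg ^^ k) R = (rneg ^^ k) R) \<longleftrightarrow> graph_on X (\<alpha> ^^ k) = Id_on X"
    for k
    using funpow_eq_iff_double_funpow_id_on[of lneg Up rneg] lneg_UpE rneg_lneg
    by (simp add: image_subset_iff rneg_funpow_even_id_iff graph_on_eq_Id_on_iff)
  ultimately show ?thesis
    unfolding n_periodic_def perm_order_is_def by simp
qed

end

theorem theorem3p12:
  fixes X :: "'a set" and le E :: "('a \<times> 'a) set" and \<alpha> :: "'a \<Rightarrow> 'a"
  assumes poset: "partial_order_on X le"
    and eqv: "equiv X E"
    and leE: "le \<subseteq> E"
    and aut: "order_automorphism X le \<alpha>"
    and alphaE: "graph_on X \<alpha> \<subseteq> E"
  shows "(graph_on X \<alpha> O converse (relc E le) = converse (relc E le) O graph_on X \<alpha> \<longrightarrow>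
           infl_algebra (UpE le E) (\<inter>) (\<union>) (O) le (graph_on X \<alpha> O converse (relc E le))
             (ldivE E) (rdivE E) \<and>
           distributive_on (UpE le E) (\<inter>) (\<union>))
       \<and> (\<forall>n::nat. 0 < n \<longrightarrow>
           (graph_on X \<alpha> O converse (relc E le) = converse (relc E le) O graph_on X \<alpha> \<longrightarrow>
             (n_periodic (UpE le E) (graph_on X \<alpha> O converse (relc E le)) (ldivE E) (rdivE E) n
              \<longleftrightarrow> perm_order_is X \<alpha> n)))"
proof -
  interpret automorphism_in_equivalence X le E \<alpha>
    using assms by unfold_locales
  show ?thesis
    using infl_algebra_UpE distributive_on_Int_Un n_periodic_iff_perm_order_is by blast
qed

end
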